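(* Let $\rho$ be the canonical rank-$\le2$ state with parameters $\theta,\phi,\alpha,\beta,\nu_1,\nu_2$. Then: (i) if $\phi=0$, $\mathcal C(\rho)=|\nu_2\sin2\alpha-\nu_1\sin2\theta|$; (ii) if $\phi=\pi/2$, $\mathcal C(\rho)=|\nu_1-\nu_2|\sin2\theta$; (iii) if $\sin2\alpha=0$, $\mathcal C(\rho)=\sin2\theta\,|\nu_1-\nu_2\sin^2\phi|$.
   Context: Qubits are labelled so that the first tensor factor belongs to Alice and the second to Bob; $\{|0\rangle,|1\rangle\}$ is the computational basis and $|ij\rangle=|i\rangle\otimes|j\rangle$. For parameters $\theta,\phi,\alpha\in[0,\pi/2]$, $\beta\in[0,2\pi]$ and weights $\nu_1,\nu_2\in[0,1]$ with $\nu_1+\nu_2=1$, set $|\psi_1\rangle=\cos\theta|00\rangle+\sin\theta|11\rangle$, $|\psi_2\rangle=\cos\phi(\cos\alpha|01\rangle+\sin\alpha|10\rangle)+e^{i\beta}\sin\phi(\sin\theta|00\rangle-\cos\theta|11\rangle)$, and $\rho=\nu_1|\psi_1\rangle\langle\psi_1|+\nu_2|\psi_2\rangle\langle\psi_2|$ (the canonical rank-$\le2$ state). The concurrence of a two-qubit density matrix $\rho$ is $\mathcal C(\rho)=\max\{0,\lambda_1-\lambda_2-\lambda_3-\lambda_4\}$, where $\lambda_1\ge\lambda_2\ge\lambda_3\ge\lambda_4$ are the eigenvalues of $\sqrt{\sqrt\rho\,\tilde\rho\,\sqrt\rho}$, $\tilde\rho=(\sigma_y\otimes\sigma_y)\rho^*(\sigma_y\otimes\sigma_y)$,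 $\rho^*$ is the entrywise complex conjugate in the computational basis, and $\sigma_x,\sigma_y,\sigma_z$ are the Pauli matrices. A two-qubit state is entangled iff its concurrence is positive. *)

theory Defs
  imports "Jordan_Normal_Form.Char_Poly"
begin

text \<open>Two-qubit states live in C^4 = C^2 (x) C^2; index 2*i+j corresponds to |ij>
  (first factor Alice, second Bob), consistent with the Kronecker product below.\<close>

definition ket :: "nat \<Rightarrow> nat \<Rightarrow> complex vec" where
  "ket i j = unit_vec 4 (2 * i + j)"

definition proj :: "complex vec \<Rightarrow> complex mat" where
  "proj v = mat (dim_vec v) (dim_vec v) (\<lambda>(i, j). v $ i * cnj (v $ j))"

definition adjoint_mat :: "complex mat \<Rightarrow> complex mat" where
  "adjoint_mat A = mat (dim_col A) (dim_row A) (\<lambda>(i, j). cnj (A $$ (j, i)))"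

definition conj_mat :: "complex mat \<Rightarrow> complex mat" where
  "conj_mat A = map_mat cnj A"

definition kron2 :: "complex mat \<Rightarrow> complex mat \<Rightarrow> complex mat" where
  "kron2 A B = mat 4 4 (\<lambda>(r, c). A $$ (r div 2, c div 2) * B $$ (r mod 2, c mod 2))"

definition sigma_y :: "complex mat" where
  "sigma_y = mat_of_rows_list 2 [[0, -\<i>], [\<i>, 0]]"

definition psd :: "nat \<Rightarrow> complex mat \<Rightarrow> bool" where
  "psd n A \<longleftrightarrow> A \<in> carrier_mat n n \<and> adjoint_mat A = A \<and>
     (\<forall>v \<in> carrier_vec n. Im (conjugate v \<bullet> (A *\<^sub>v v)) = 0 \<and> 0 \<le> Re (conjugate v \<bullet> (A *\<^sub>v v)))"

definition msqrt :: "complex mat \<Rightarrow> complex mat" where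
  "msqrt A = (THE B. psd (dim_row A) B \<and> B * B = A)"

definition spin_flip :: "complex mat \<Rightarrow> complex mat" where
  "spin_flip \<rho> = kron2 sigma_y sigma_y * conj_mat \<rho> * kron2 sigma_y sigma_y"

definition conc_eigs :: "complex mat \<Rightarrow> real list" where
  "conc_eigs \<rho> = (let R = msqrt (msqrt \<rho> * spin_flip \<rho> * msqrt \<rho>) in
     THE l. length l = 4 \<and> sorted_wrt (\<ge>) l \<and>
       char_poly R = prod_list (map (\<lambda>x. [:- complex_of_real x, 1:]) l))"

definition concurrence :: "complex mat \<Rightarrow> real" where
  "concurrence \<rho> = (let l = conc_eigs \<rho> in max 0 (l!0 - l!1 - l!2 - l!3))"

definition psi1 :: "real \<Rightarrow> complex vec" where
  "psi1 \<theta> = complex_of_real (cos \<theta>) \<cdot>\<^sub>v ket 0 0 + complex_of_real (sin \<theta>) \<cdot>\<^sub>v ket 1 1"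

definition psi2 :: "real \<Rightarrow> real \<Rightarrow> real \<Rightarrow> real \<Rightarrow> complex vec" where
  "psi2 \<theta> \<phi> \<alpha> \<beta> =
     complex_of_real (cos \<phi>) \<cdot>\<^sub>v (complex_of_real (cos \<alpha>) \<cdot>\<^sub>v ket 0 1 + complex_of_real (sin \<alpha>) \<cdot>\<^sub>v ket 1 0)
   + (cis \<beta> * complex_of_real (sin \<phi>)) \<cdot>\<^sub>v
       (complex_of_real (sin \<theta>) \<cdot>\<^sub>v ket 0 0 - complex_of_real (cos \<theta>) \<cdot>\<^sub>v ket 1 1)"

definition canon_state :: "real \<Rightarrow> real \<Rightarrow> real \<Rightarrow> real \<Rightarrow> real \<Rightarrow> real \<Rightarrow> complex mat" where
  "canon_state \<theta> \<phi> \<alpha> \<beta> \<nu>1 \<nu>2 =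
     complex_of_real \<nu>1 \<cdot>\<^sub>m proj (psi1 \<theta>) + complex_of_real \<nu>2 \<cdot>\<^sub>m proj (psi2 \<theta> \<phi> \<alpha> \<beta>)"

end

theory Submission
  imports Defs
begin

text \<open>Write \<open>\<rho> = U D U\<^sup>\<dagger>\<close> with \<open>U\<close> unitary (first two columns \<open>\<psi>\<^sub>1, \<psi>\<^sub>2\<close>)
  and \<open>D = diag(\<nu>\<^sub>1, \<nu>\<^sub>2, 0, 0)\<close>. Then \<open>\<surd>\<rho> \<rho>~ \<surd>\<rho> = U K K\<^sup>* U\<^sup>\<dagger>\<close> for the complex
  symmetric matrix \<open>K = \<surd>D U\<^sup>\<dagger> S U\<^sup>* \<surd>D\<close>, where \<open>S = \<sigma>\<^sub>y \<otimes> \<sigma>\<^sub>y\<close>. A Takagi factorisation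
  \<open>K = W \<Lambda> W\<^sup>T\<close> with \<open>W\<close> unitary and \<open>\<Lambda>\<close> real diagonal turns this into
  \<open>(UW) \<Lambda>\<^sup>2 (UW)\<^sup>\<dagger>\<close>, so the \<open>\<lambda>\<^sub>i\<close> of the concurrence are the \<open>|\<Lambda>\<^sub>i|\<close>.
  Only the upper left \<open>2\<times>2\<close> block of \<open>K\<close> is nonzero, and in each of the three cases
  it has the form \<open>[[a, F b], [F b, F\<^sup>2 d]]\<close> with \<open>|F| = 1\<close>, \<open>a, b, d\<close> real and
  \<open>a d \<le> b\<^sup>2\<close>. A real rotation diagonalises it with eigenvalues of opposite signs whose
  sum is \<open>a + d\<close>, hence \<open>C(\<rho>) = |a + d|\<close>.\<close>

lemma adjoint_mat_dims [simp]:
  "dim_row (adjoint_mat A) = dim_col A" "dim_col (adjoint_mat A) = dim_row A"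
  by (simp_all add: adjoint_mat_def)

lemma adjoint_mat_carrier [simp]: "A \<in> carrier_mat n m \<Longrightarrow> adjoint_mat A \<in> carrier_mat m n"
  by (auto simp: adjoint_mat_def)

lemma adjoint_mat_index [simp]:
  "i < dim_col A \<Longrightarrow> j < dim_row A \<Longrightarrow> adjoint_mat A $$ (i, j) = cnj (A $$ (j, i))"
  by (simp add: adjoint_mat_def)

lemma adjoint_mat_adjoint_mat [simp]: "adjoint_mat (adjoint_mat A) = A"
  by (rule eq_matI) auto

lemma adjoint_mat_mult:
  "dim_col A = dim_row B \<Longrightarrow> adjoint_mat (A * B) = adjoint_mat B * adjoint_mat A"
  by (rule eq_matI) (auto simp: scalar_prod_def mult.commute)

lemma adjoint_mat_minus:
  "A \<in> carrier_mat n m \<Longrightarrow> B \<in> carrier_mat n m \<Longrightarrow> adjoint_mat (A - B) = adjoint_mat A - adjoint_mat B"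
  by (rule eq_matI) auto

lemma conj_mat_dims [simp]:
  "dim_row (conj_mat A) = dim_row A" "dim_col (conj_mat A) = dim_col A"
  by (simp_all add: conj_mat_def)

lemma conj_mat_index [simp]:
  "i < dim_row A \<Longrightarrow> j < dim_col A \<Longrightarrow> conj_mat A $$ (i, j) = cnj (A $$ (i, j))"
  by (simp add: conj_mat_def)

lemma conj_mat_conj_mat [simp]: "conj_mat (conj_mat A) = A"
  by (rule eq_matI) auto

lemma conj_mat_one [simp]: "conj_mat (1\<^sub>m n) = 1\<^sub>m n"
  by (rule eq_matI) auto

lemma conj_mat_adjoint_mat [simp]: "conj_mat (adjoint_mat A) = transpose_mat A"
  by (rule eq_matI) auto

lemma conj_mat_transpose_mat [simp]: "conj_mat (transpose_mat A) = adjoint_mat A"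
  by (rule eq_matI) auto

lemma conj_mat_mult: "dim_col A = dim_row B \<Longrightarrow> conj_mat (A * B) = conj_mat A * conj_mat B"
  by (rule eq_matI) (auto simp: scalar_prod_def)

lemma assoc_mult_mat_dims:
  "dim_col A = dim_row B \<Longrightarrow> dim_col B = dim_row C \<Longrightarrow> A * B * C = A * (B * C)"
  by (rule assoc_mult_mat[of _ "dim_row A" "dim_row B" _ "dim_row C" _ "dim_col C"])
    (auto intro!: carrier_matI)

lemma mat_of_rows_list_dims [simp]:
  "dim_row (mat_of_rows_list m rs) = length rs" "dim_col (mat_of_rows_list m rs) = m"
  by (simp_all add: mat_of_rows_list_def)

lemma mat_of_rows_list_index [simp]:
  "i < length rs \<Longrightarrow> j < m \<Longrightarrow> mat_of_rows_list m rs $$ (i, j) = rs ! i ! j"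
  by (simp add: mat_of_rows_list_def)

lemma mat_4_eqI:
  assumes "dim_row A = 4" "dim_col A = 4" "dim_row B = 4" "dim_col B = 4"
    and "A $$ (0, 0) = B $$ (0, 0)" "A $$ (0, 1) = B $$ (0, 1)" "A $$ (0, 2) = B $$ (0, 2)" "A $$ (0, 3) = B $$ (0, 3)"
    and "A $$ (1, 0) = B $$ (1, 0)" "A $$ (1, 1) = B $$ (1, 1)" "A $$ (1, 2) = B $$ (1, 2)" "A $$ (1, 3) = B $$ (1, 3)"
    and "A $$ (2, 0) = B $$ (2, 0)" "A $$ (2, 1) = B $$ (2, 1)" "A $$ (2, 2) = B $$ (2, 2)" "A $$ (2, 3) = B $$ (2, 3)"
    and "A $$ (3, 0) = B $$ (3, 0)" "A $$ (3, 1) = B $$ (3, 1)" "A $$ (3, 2) = B $$ (3, 2)" "A $$ (3, 3) = B $$ (3, 3)"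
  shows "A = B"
proof (rule eq_matI)
  fix i j assume "i < dim_row B" "j < dim_col B"
  then have "i \<in> {0, 1, 2, 3}" "j \<in> {0, 1, 2, 3}" using assms(3,4) by auto
  then show "A $$ (i, j) = B $$ (i, j)" using assms(5-) by auto
qed (use assms(1-4) in auto)

lemma index_mult_mat_4:
  "dim_col A = 4 \<Longrightarrow> dim_row B = 4 \<Longrightarrow> i < dim_row A \<Longrightarrow> j < dim_col B \<Longrightarrow>
   (A * B) $$ (i, j) = A $$ (i, 0) * B $$ (0, j) + A $$ (i, 1) * B $$ (1, j)
     + A $$ (i, 2) * B $$ (2, j) + A $$ (i, 3) * B $$ (3, j)"
  by (simp add: scalar_prod_def eval_nat_numeral)

lemma scalar_prod_adjoint_mat:
  assumes A: "A \<in> carrier_mat n n" and v: "v \<in> carrier_vec n" and w: "w \<in> carrier_vec n"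
  shows "conjugate v \<bullet> (A *\<^sub>v w) = conjugate (adjoint_mat A *\<^sub>v v) \<bullet> w"
proof -
  have "conjugate v \<bullet> (A *\<^sub>v w) = (\<Sum>i<n. \<Sum>j<n. cnj (v $ i) * A $$ (i, j) * w $ j)"
    using A v w by (simp add: scalar_prod_def lessThan_atLeast0 sum_distrib_left mult.assoc)
  also have "\<dots> = (\<Sum>j<n. \<Sum>i<n. cnj (v $ i) * A $$ (i, j) * w $ j)"
    by (rule sum.swap)
  also have "\<dots> = conjugate (adjoint_mat A *\<^sub>v v) \<bullet> w"
    using A v w by (simp add: scalar_prod_def lessThan_atLeast0 sum_distrib_left ac_simps)
  finally show ?thesis .
qed

section \<open>Uniqueness of positive semidefinite square roots\<close>

lemma psdD:
  assumes "psd n A"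
  shows "A \<in> carrier_mat n n" "adjoint_mat A = A"
    and "v \<in> carrier_vec n \<Longrightarrow> 0 \<le> conjugate v \<bullet> (A *\<^sub>v v)"
  using assms unfolding psd_def by (auto simp: less_eq_complex_def)

lemma nonneg_quadratic_imp_linear_coeff_eq_0:
  fixes a b :: real
  assumes b: "0 \<le> b" and nonneg: "\<And>t. 0 \<le> 2 * t * a + t * t * b"
  shows "a = 0"
proof (cases "b = 0")
  case True
  then show ?thesis using nonneg[of "- a"] by (auto simp: mult_le_0_iff)
next
  case False
  then have "0 < b" using b by simp
  then have "2 * (- a / b) * a + (- a / b) * (- a / b) * b = - (a * a / b)"
    by (simp add: field_simps)
  then have "a * a / b \<le> 0" using nonneg[of "- a / b"] by simp
  then show ?thesis using \<open>0 < b\<close> by (auto simp: divide_le_0_iff mult_le_0_iff)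
qed

lemma psd_mult_vec_eq_0:
  assumes psd: "psd n M" and v: "v \<in> carrier_vec n" and q: "conjugate v \<bullet> (M *\<^sub>v v) = 0"
  shows "M *\<^sub>v v = 0\<^sub>v n"
proof -
  note M = psdD(1)[OF psd] and herm = psdD(2)[OF psd]
  define w where "w = M *\<^sub>v v"
  have w: "w \<in> carrier_vec n" using M v by (simp add: w_def)
  define a where "a = conjugate w \<bullet> w"
  define b where "b = conjugate w \<bullet> (M *\<^sub>v w)"
  have a: "Im a = 0" "0 \<le> Re a"
    using conjugate_square_ge_0_vec[of w] conjugate_vec_sprod_comm[OF w w]
    by (simp_all add: a_def less_eq_complex_def)
  have b: "Im b = 0" "0 \<le> Re b"
    using psdD(3)[OF psd w] by (simp_all add: b_def less_eq_complex_def)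
  have vw: "conjugate v \<bullet> (M *\<^sub>v w) = a"
    using scalar_prod_adjoint_mat[OF M v w] herm by (simp add: a_def w_def)
  \<comment> \<open>the form evaluated at \<open>v + t M v\<close>, \<open>t\<close> real\<close>
  have "0 \<le> 2 * t * Re a + t * t * Re b" for t :: real
  proof -
    let ?x = "v + complex_of_real t \<cdot>\<^sub>v w"
    have "conjugate ?x \<bullet> (M *\<^sub>v ?x) = conjugate v \<bullet> (M *\<^sub>v v)
        + of_real t * (conjugate v \<bullet> (M *\<^sub>v w)) + of_real t * (conjugate w \<bullet> (M *\<^sub>v v))
        + of_real t * of_real t * (conjugate w \<bullet> (M *\<^sub>v w))"
      using M v w
      by (simp add: conjugate_add_vec[of _ n] conjugate_smult_vec mult_add_distrib_mat_vec[OF M]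
          mult_mat_vec[OF M] add_scalar_prod_distrib[of _ n] scalar_prod_add_distrib[of _ n] algebra_simps)
    also have "\<dots> = of_real (2 * t * Re a + t * t * Re b)"
      using q vw a b by (simp add: complex_eq_iff b_def a_def w_def)
    finally show ?thesis
      using psdD(3)[OF psd, of ?x] v w by (simp add: less_eq_complex_def)
  qed
  then have "Re a = 0" using b(2) by (rule nonneg_quadratic_imp_linear_coeff_eq_0[rotated])
  then have "w \<bullet>c w = 0" using a conjugate_vec_sprod_comm[OF w w] by (simp add: a_def complex_eq_iff)
  then show ?thesis using w by (simp add: w_def)
qed

lemma hermitian_col_conjugate:
  assumes D: "D \<in> carrier_mat n n" "adjoint_mat D = D" and i: "i < n"
  shows "conjugate (col D i) = row D i"
proof (rule eq_vecI)
  fix j assume "j < dim_vec (row D i)"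
  then have j: "j < n" using D by simp
  have "D $$ (i, j) = cnj (D $$ (j, i))"
    using adjoint_mat_index[of i D j] D i j by simp
  then show "conjugate (col D i) $ j = row D i $ j" using D i j by simp
qed (use D in simp)

lemma hermitian_square_eq_0:
  assumes D: "D \<in> carrier_mat n n" "adjoint_mat D = D" and DD: "D * D = 0\<^sub>m n n"
  shows "D = 0\<^sub>m n n"
proof (rule eq_matI)
  fix i j assume "i < dim_row (0\<^sub>m n n :: complex mat)" "j < dim_col (0\<^sub>m n n :: complex mat)"
  then have i: "i < n" and j: "j < n" by auto
  have cj: "col D j \<in> carrier_vec n" using D j by simp
  have "col D j \<bullet>c col D j = row D j \<bullet> col D j"
    using hermitian_col_conjugate[OF D j] comm_scalar_prod[OF cj, of "row D j"] D j by simp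
  also have "\<dots> = 0" using arg_cong[OF DD, of "\<lambda>M. M $$ (j, j)"] D j by simp
  finally have "col D j = 0\<^sub>v n" using cj by simp
  then have "col D j $ i = 0" using i by simp
  then show "D $$ (i, j) = 0\<^sub>m n n $$ (i, j)" using D i j by simp
qed (use D in auto)

lemma quadratic_form_col_eq_diag:
  assumes D: "D \<in> carrier_mat n n" "adjoint_mat D = D" and B: "B \<in> carrier_mat n n" and i: "i < n"
  shows "conjugate (col D i) \<bullet> (B *\<^sub>v col D i) = (D * (B * D)) $$ (i, i)"
  using hermitian_col_conjugate[OF D i] col_mult2[OF B D(1) i] D B i by simp

lemma diag_sum_mult_comm:
  fixes A B :: "complex mat"
  assumes "A \<in> carrier_mat n n" "B \<in> carrier_mat n n"
  shows "(\<Sum>i<n. (A * B) $$ (i, i)) = (\<Sum>i<n. (B * A) $$ (i, i))"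
proof -
  have "(\<Sum>i<n. (A * B) $$ (i, i)) = (\<Sum>i<n. \<Sum>k<n. A $$ (i, k) * B $$ (k, i))"
    using assms by (simp add: scalar_prod_def lessThan_atLeast0)
  also have "\<dots> = (\<Sum>k<n. \<Sum>i<n. B $$ (k, i) * A $$ (i, k))"
    by (subst sum.swap) (simp add: mult.commute)
  also have "\<dots> = (\<Sum>i<n. (B * A) $$ (i, i))"
    using assms by (simp add: scalar_prod_def lessThan_atLeast0)
  finally show ?thesis .
qed

lemma psd_mult_eq_0:
  assumes B: "psd n B" and D: "D \<in> carrier_mat n n"
    and q: "\<And>j. j < n \<Longrightarrow> conjugate (col D j) \<bullet> (B *\<^sub>v col D j) = 0"
  shows "B * D = 0\<^sub>m n n"
proof (rule eq_matI)
  fix i j assume "i < dim_row (0\<^sub>m n n :: complex mat)" "j < dim_col (0\<^sub>m n n :: complex mat)"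
  then have i: "i < n" and j: "j < n" by auto
  have "col (B * D) j = 0\<^sub>v n"
    using psd_mult_vec_eq_0[OF B _ q[OF j]] col_mult2[OF psdD(1)[OF B] D j] D j by simp
  then have "col (B * D) j $ i = 0" using i by simp
  then show "(B * D) $$ (i, j) = 0\<^sub>m n n $$ (i, j)" using psdD(1)[OF B] D i j by simp
qed (use psdD(1)[OF B] D in auto)

text \<open>With \<open>D = B - C\<close>, \<open>B\<^sup>2 = C\<^sup>2\<close> gives \<open>B D = - D C\<close>, so
  \<open>tr (D B D) + tr (D C D) = 0\<close>; both traces are sums of nonnegative quadratic forms,
  hence \<open>B D = C D = 0\<close> and \<open>D\<^sup>2 = 0\<close>.\<close>
lemma psd_square_root_unique:
  assumes B: "psd n B" and C: "psd n C" and BC: "B * B = C * C"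
  shows "B = C"
proof -
  note Bc = psdD(1)[OF B] and Cc = psdD(1)[OF C]
  define D where "D = B - C"
  have Dc: "D \<in> carrier_mat n n" using Bc Cc by (simp add: D_def minus_carrier_mat)
  have herm: "adjoint_mat D = D"
    unfolding D_def using adjoint_mat_minus[OF Bc Cc] psdD(2)[OF B] psdD(2)[OF C] by simp
  have BD: "B * D = - (D * C)"
  proof -
    have "B * D = B * B - B * C" unfolding D_def using Bc Cc by (simp add: mult_minus_distrib_mat)
    moreover have "D * C = B * C - C * C" unfolding D_def using Bc Cc by (simp add: minus_mult_distrib_mat)
    ultimately show ?thesis using BC Bc Cc by (intro eq_matI) auto
  qed
  define qB where "qB i = conjugate (col D i) \<bullet> (B *\<^sub>v col D i)" for i
  define qC where "qC i = conjugate (col D i) \<bullet> (C *\<^sub>v col D i)" for i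
  have qB0: "0 \<le> qB i" and qC0: "0 \<le> qC i" if "i < n" for i
    unfolding qB_def qC_def using psdD(3)[OF B] psdD(3)[OF C] Dc that by simp_all
  have "(\<Sum>i<n. qB i + qC i) = (\<Sum>i<n. (D * (B * D)) $$ (i, i)) + (\<Sum>i<n. (D * (C * D)) $$ (i, i))"
    unfolding qB_def qC_def
    using quadratic_form_col_eq_diag[OF Dc herm Bc] quadratic_form_col_eq_diag[OF Dc herm Cc]
    by (simp add: sum.distrib)
  also have "(\<Sum>i<n. (D * (B * D)) $$ (i, i)) = - (\<Sum>i<n. (D * (D * C)) $$ (i, i))"
    unfolding BD using Dc Cc by (simp add: sum_negf)
  also have "(\<Sum>i<n. (D * (C * D)) $$ (i, i)) = (\<Sum>i<n. (D * (D * C)) $$ (i, i))"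
    using diag_sum_mult_comm[of "D * C" n D] Dc Cc by simp
  finally have "(\<Sum>i<n. qB i + qC i) = 0" by simp
  then have "qB i = 0 \<and> qC i = 0" if "i < n" for i
    using sum_nonneg_eq_0_iff[of "{..<n}" "\<lambda>i. qB i + qC i"] qB0 qC0 that
    by (simp add: add_nonneg_eq_0_iff)
  then have "B * D = 0\<^sub>m n n" "C * D = 0\<^sub>m n n"
    using psd_mult_eq_0[OF B Dc] psd_mult_eq_0[OF C Dc] by (simp_all add: qB_def qC_def)
  moreover have "D * D = B * D - C * D"
    unfolding D_def by (rule minus_mult_distrib_mat) (use Bc Cc in \<open>auto simp: minus_carrier_mat\<close>)
  ultimately have D0: "D = 0\<^sub>m n n" using hermitian_square_eq_0[OF Dc herm] by simp
  show ?thesis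
  proof (rule eq_matI)
    fix i j assume "i < dim_row C" "j < dim_col C"
    then show "B $$ (i, j) = C $$ (i, j)"
      using arg_cong[OF D0, of "\<lambda>M. M $$ (i, j)"] Bc Cc by (simp add: D_def)
  qed (use Bc Cc in auto)
qed

lemma msqrt_eqI:
  assumes "psd n B" "B * B = A" "dim_row A = n"
  shows "msqrt A = B"
  unfolding msqrt_def assms(3)
proof (rule the_equality)
  fix C assume "psd n C \<and> C * C = A"
  then show "C = B" using psd_square_root_unique[of n C B] assms by simp
qed (use assms in simp)

section \<open>Unitary conjugates of real diagonal matrices\<close>

abbreviation real_diag :: "nat \<Rightarrow> (nat \<Rightarrow> real) \<Rightarrow> complex mat" where
  "real_diag n f \<equiv> mat_diag n (\<lambda>i. complex_of_real (f i))"

lemma mat_diag_index [simp]: "i < n \<Longrightarrow> j < n \<Longrightarrow> mat_diag n f $$ (i, j) = (if i = j then f j else 0)"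
  by (simp add: mat_diag_def)

lemma mat_diag_dims [simp]: "dim_row (mat_diag n f) = n" "dim_col (mat_diag n f) = n"
  by (simp_all add: mat_diag_def)

lemma mat_diag_mult_vec_index:
  assumes "v \<in> carrier_vec n" "i < n"
  shows "(mat_diag n f *\<^sub>v v) $ i = f i * v $ i"
proof -
  have "(mat_diag n f *\<^sub>v v) $ i = (\<Sum>k\<in>{0..<n}. (if i = k then f k else 0) * v $ k)"
    using assms by (simp add: scalar_prod_def)
  also have "\<dots> = (\<Sum>k\<in>{0..<n}. if k = i then f i * v $ i else 0)"
    by (rule sum.cong) auto
  finally show ?thesis using assms(2) by simp
qed

lemma adjoint_mat_real_diag [simp]: "adjoint_mat (real_diag n f) = real_diag n f"
  by (rule eq_matI) auto

lemma conj_mat_real_diag [simp]: "conj_mat (real_diag n f) = real_diag n f"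
  by (rule eq_matI) auto

definition unitary_mat :: "nat \<Rightarrow> complex mat \<Rightarrow> bool" where
  "unitary_mat n U \<longleftrightarrow> U \<in> carrier_mat n n \<and> adjoint_mat U * U = 1\<^sub>m n"

lemma unitary_matD:
  assumes "unitary_mat n U"
  shows "U \<in> carrier_mat n n" "adjoint_mat U * U = 1\<^sub>m n" "U * adjoint_mat U = 1\<^sub>m n"
  using assms mat_mult_left_right_inverse[of "adjoint_mat U" n U]
  by (auto simp: unitary_mat_def)

lemma unitary_mat_mult:
  assumes U: "unitary_mat n U" and W: "unitary_mat n W"
  shows "unitary_mat n (U * W)"
proof -
  note Uc = unitary_matD(1)[OF U] and Wc = unitary_matD(1)[OF W]
  have "adjoint_mat (U * W) * (U * W) = adjoint_mat W * ((adjoint_mat U * U) * W)"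
    using Uc Wc by (simp add: adjoint_mat_mult assoc_mult_mat_dims)
  also have "\<dots> = 1\<^sub>m n" using unitary_matD(2)[OF U] unitary_matD(2)[OF W] Wc by simp
  finally show ?thesis using Uc Wc by (simp add: unitary_mat_def)
qed

lemma psd_unitary_conj:
  assumes V: "V \<in> carrier_mat n n" and f: "\<And>i. i < n \<Longrightarrow> 0 \<le> f i"
  shows "psd n (V * real_diag n f * adjoint_mat V)"
proof -
  have "0 \<le> conjugate v \<bullet> ((V * real_diag n f * adjoint_mat V) *\<^sub>v v)" if v: "v \<in> carrier_vec n" for v
  proof -
    define w where "w = adjoint_mat V *\<^sub>v v"
    have w: "w \<in> carrier_vec n" using mult_mat_vec_carrier[OF adjoint_mat_carrier[OF V] v] by (simp add: w_def)
    have "(V * real_diag n f * adjoint_mat V) *\<^sub>v v = V *\<^sub>v (real_diag n f *\<^sub>v w)"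
      using assoc_mult_mat_vec[OF mult_carrier_mat[OF V mat_diag_dim] adjoint_mat_carrier[OF V] v]
        assoc_mult_mat_vec[OF V mat_diag_dim w]
      by (simp add: w_def)
    then have "conjugate v \<bullet> ((V * real_diag n f * adjoint_mat V) *\<^sub>v v) = conjugate w \<bullet> (real_diag n f *\<^sub>v w)"
      using scalar_prod_adjoint_mat[OF V v mult_mat_vec_carrier[OF mat_diag_dim w]] by (simp add: w_def)
    also have "\<dots> = (\<Sum>i<n. complex_of_real (f i) * (w $ i * cnj (w $ i)))"
      using w by (simp add: scalar_prod_def lessThan_atLeast0 mat_diag_mult_vec_index ac_simps
          del: index_mult_mat_vec)
    also have "0 \<le> \<dots>"
    proof (rule sum_nonneg)
      fix i assume "i \<in> {..<n}"
      then have "0 \<le> complex_of_real (f i)" using f by (simp add: less_eq_complex_def)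
      moreover have "0 \<le> w $ i * cnj (w $ i)" using conjugate_square_positive[of "w $ i"] by simp
      ultimately show "0 \<le> complex_of_real (f i) * (w $ i * cnj (w $ i))"
        by (rule mult_nonneg_nonneg)
    qed
    finally show ?thesis .
  qed
  moreover have "adjoint_mat (V * real_diag n f * adjoint_mat V) = V * real_diag n f * adjoint_mat V"
    using V by (simp add: adjoint_mat_mult assoc_mult_mat_dims)
  ultimately show ?thesis using V unfolding psd_def by (auto simp: less_eq_complex_def)
qed

lemma unitary_conj_real_diag_mult:
  assumes "unitary_mat n V"
  shows "(V * real_diag n f * adjoint_mat V) * (V * real_diag n g * adjoint_mat V)
       = V * real_diag n (\<lambda>i. f i * g i) * adjoint_mat V"
proof -
  note Vc = unitary_matD(1)[OF assms]
  have "(V * real_diag n f * adjoint_mat V) * (V * real_diag n g * adjoint_mat V)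
      = V * (real_diag n f * ((adjoint_mat V * V) * (real_diag n g * adjoint_mat V)))"
    using Vc by (simp add: assoc_mult_mat_dims)
  also have "\<dots> = V * (real_diag n f * real_diag n g) * adjoint_mat V"
    using Vc unitary_matD(2)[OF assms] by (simp add: assoc_mult_mat_dims del: mat_diag_diag)
  finally show ?thesis by simp
qed

lemma msqrt_unitary_conj:
  assumes V: "unitary_mat n V" and g: "\<And>i. i < n \<Longrightarrow> 0 \<le> g i"
  shows "msqrt (V * real_diag n g * adjoint_mat V) = V * real_diag n (\<lambda>i. sqrt (g i)) * adjoint_mat V"
proof (rule msqrt_eqI)
  note Vc = unitary_matD(1)[OF V]
  show "psd n (V * real_diag n (\<lambda>i. sqrt (g i)) * adjoint_mat V)"
    using Vc g by (intro psd_unitary_conj) auto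
  have "real_diag n (\<lambda>i. sqrt (g i) * sqrt (g i)) = real_diag n g"
    using g by (intro eq_matI) auto
  then show "(V * real_diag n (\<lambda>i. sqrt (g i)) * adjoint_mat V) * (V * real_diag n (\<lambda>i. sqrt (g i)) * adjoint_mat V)
      = V * real_diag n g * adjoint_mat V"
    by (simp only: unitary_conj_real_diag_mult[OF V])
  show "dim_row (V * real_diag n g * adjoint_mat V) = n" using Vc by simp
qed

lemma char_poly_unitary_conj:
  assumes V: "unitary_mat n V"
  shows "char_poly (V * real_diag n f * adjoint_mat V)
       = prod_list (map (\<lambda>i. [:- complex_of_real (f i), 1:]) [0..<n])"
proof -
  have "similar_mat (V * real_diag n f * adjoint_mat V) (real_diag n f)"
    unfolding similar_mat_def similar_mat_wit_def using unitary_matD[OF V]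
    by (intro exI[of _ V] exI[of _ "adjoint_mat V"]) (auto simp: Let_def)
  then have "char_poly (V * real_diag n f * adjoint_mat V) = char_poly (real_diag n f)"
    by (rule char_poly_similar)
  also have "\<dots> = prod_list (map (\<lambda>a. [:- a, 1:]) (diag_mat (real_diag n f)))"
    by (rule char_poly_upper_triangular[of _ n]) (auto simp: upper_triangular_def)
  also have "diag_mat (real_diag n f) = map (\<lambda>i. complex_of_real (f i)) [0..<n]"
    by (simp add: diag_mat_def)
  finally show ?thesis by (simp add: comp_def)
qed

section \<open>Concurrence from a Takagi factorisation\<close>

definition spin_flip_mat :: "complex mat" where
  "spin_flip_mat = mat_of_rows_list 4 [[0, 0, 0, -1], [0, 0, 1, 0], [0, 1, 0, 0], [-1, 0, 0, 0]]"

lemma spin_flip_mat_dims [simp]: "dim_row spin_flip_mat = 4" "dim_col spin_flip_mat = 4"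
  by (simp_all add: spin_flip_mat_def)

lemma kron2_sigma_y: "kron2 sigma_y sigma_y = spin_flip_mat"
  by (rule mat_4_eqI) (simp_all add: kron2_def spin_flip_mat_def sigma_y_def)

lemma conj_mat_spin_flip_mat [simp]: "conj_mat spin_flip_mat = spin_flip_mat"
  by (rule mat_4_eqI) (simp_all add: spin_flip_mat_def)

text \<open>For \<open>\<rho> = U diag(g) U\<^sup>\<dagger>\<close> one has \<open>\<surd>\<rho> \<rho>~ \<surd>\<rho> = U K K\<^sup>* U\<^sup>\<dagger>\<close> with \<open>K\<close> the
  following complex symmetric matrix.\<close>
definition flip_core :: "complex mat \<Rightarrow> (nat \<Rightarrow> real) \<Rightarrow> complex mat" where
  "flip_core U g = real_diag 4 (\<lambda>i. sqrt (g i)) * adjoint_mat U * spin_flip_mat * conj_mat U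
     * real_diag 4 (\<lambda>i. sqrt (g i))"

lemma msqrt_flip_takagi:
  assumes U: "unitary_mat 4 U" and W: "unitary_mat 4 W" and g: "\<And>i. 0 \<le> g i"
    and \<rho>: "\<rho> = U * real_diag 4 g * adjoint_mat U"
    and takagi: "flip_core U g = W * real_diag 4 l * transpose_mat W"
  shows "msqrt (msqrt \<rho> * spin_flip \<rho> * msqrt \<rho>) = (U * W) * real_diag 4 (\<lambda>i. \<bar>l i\<bar>) * adjoint_mat (U * W)"
proof -
  note Uc = unitary_matD(1)[OF U] and Wc = unitary_matD(1)[OF W]
  define R where "R = real_diag 4 (\<lambda>i. sqrt (g i))"
  define K where "K = flip_core U g"
  define L where "L = real_diag 4 l"
  have RR: "R * R = real_diag 4 g"
    unfolding R_def using g by (intro eq_matI) (auto simp flip: of_real_mult)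
  have sqrt_\<rho>: "msqrt \<rho> = U * R * adjoint_mat U"
    unfolding \<rho> R_def using msqrt_unitary_conj[OF U] g by simp
  have conj_\<rho>: "conj_mat \<rho> = conj_mat U * (R * R) * transpose_mat U"
    unfolding \<rho> RR using Uc by (simp add: conj_mat_mult)
  have conj_K: "conj_mat K = R * transpose_mat U * spin_flip_mat * U * R"
    unfolding K_def flip_core_def R_def using Uc by (simp add: conj_mat_mult)
  have "msqrt \<rho> * spin_flip \<rho> * msqrt \<rho> = U * (K * (conj_mat K * adjoint_mat U))"
    unfolding sqrt_\<rho> spin_flip_def kron2_sigma_y conj_\<rho> conj_K
    unfolding K_def flip_core_def R_def[symmetric]
    using Uc by (simp add: assoc_mult_mat_dims R_def del: mat_diag_diag)
  also have "\<dots> = (U * W) * L * (transpose_mat W * conj_mat W) * L * (adjoint_mat W * adjoint_mat U)"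
    unfolding K_def takagi L_def using Uc Wc by (simp add: conj_mat_mult assoc_mult_mat_dims del: mat_diag_diag)
  also have "transpose_mat W * conj_mat W = 1\<^sub>m 4"
    using unitary_matD(2)[OF W] conj_mat_mult[of "adjoint_mat W" W] Wc by simp
  also have "(U * W) * L * 1\<^sub>m 4 * L = (U * W) * real_diag 4 (\<lambda>i. l i * l i)"
    unfolding L_def using Uc Wc by (simp add: assoc_mult_mat_dims)
  also have "adjoint_mat W * adjoint_mat U = adjoint_mat (U * W)"
    using Uc Wc by (simp add: adjoint_mat_mult)
  finally have "msqrt \<rho> * spin_flip \<rho> * msqrt \<rho> = (U * W) * real_diag 4 (\<lambda>i. l i * l i) * adjoint_mat (U * W)" .
  then show ?thesis
    using msqrt_unitary_conj[OF unitary_mat_mult[OF U W], of "\<lambda>i. l i * l i"] by simp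
qed

abbreviation linear_factors :: "real list \<Rightarrow> complex poly" where
  "linear_factors l \<equiv> prod_list (map (\<lambda>x. [:- complex_of_real x, 1:]) l)"

lemma poly_linear_factors: "poly (linear_factors l) z = prod_list (map (\<lambda>x. z - complex_of_real x) l)"
  by (induction l) (auto simp: algebra_simps)

lemma linear_factors_inj:
  assumes "sorted_wrt (\<ge>) xs" "sorted_wrt (\<ge>) ys" "length xs = length ys"
    and "linear_factors xs = linear_factors ys"
  shows "xs = ys"
  using assms
proof (induction xs arbitrary: ys)
  case (Cons x xs ys)
  obtain y ys' where ys: "ys = y # ys'" using Cons.prems(3) by (cases ys) auto
  have root: "z \<in> set l" if "poly (linear_factors l) (complex_of_real z) = 0" for z l
    using that unfolding poly_linear_factors prod_list_zero_iff by auto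
  have "poly (linear_factors (x # xs)) (complex_of_real y) = 0"
    unfolding Cons.prems(4) ys poly_linear_factors by simp
  then have "y \<le> x" using root Cons.prems(1) by fastforce
  moreover have "poly (linear_factors ys) (complex_of_real x) = 0"
    unfolding Cons.prems(4)[symmetric] poly_linear_factors by simp
  then have "x \<le> y" using root Cons.prems(2) ys by fastforce
  ultimately have "x = y" by simp
  then have "[:- complex_of_real x, 1:] * linear_factors xs = [:- complex_of_real x, 1:] * linear_factors ys'"
    using Cons.prems(4) ys by (simp only: list.map prod_list.Cons)
  moreover have "[:- complex_of_real x, 1:] \<noteq> 0" by simp
  ultimately have "linear_factors xs = linear_factors ys'" using mult_left_cancel by blast
  then show ?case using Cons.IH[of ys'] Cons.prems \<open>x = y\<close> ys by simp
qed simp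

lemma conc_eigs_eqI:
  assumes "length l = 4" "sorted_wrt (\<ge>) l"
    and "char_poly (msqrt (msqrt \<rho> * spin_flip \<rho> * msqrt \<rho>)) = linear_factors l"
  shows "conc_eigs \<rho> = l"
  unfolding conc_eigs_def Let_def
proof (rule the_equality)
  show "length l = 4 \<and> sorted_wrt (\<ge>) l \<and>
    char_poly (msqrt (msqrt \<rho> * spin_flip \<rho> * msqrt \<rho>)) = linear_factors l"
    using assms by blast
  fix l' assume l': "length l' = 4 \<and> sorted_wrt (\<ge>) l' \<and>
    char_poly (msqrt (msqrt \<rho> * spin_flip \<rho> * msqrt \<rho>)) = linear_factors l'"
  then have "linear_factors l' = linear_factors l" using assms(3) by metis
  then show "l' = l" using l' assms(1,2) by (intro linear_factors_inj) auto
qed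

lemma concurrence_takagi:
  assumes U: "unitary_mat 4 U" and W: "unitary_mat 4 W" and g: "\<And>i. 0 \<le> g i"
    and \<rho>: "\<rho> = U * real_diag 4 g * adjoint_mat U"
    and takagi: "flip_core U g = W * real_diag 4 l * transpose_mat W"
    and l: "l 2 = 0" "l 3 = 0"
  shows "concurrence \<rho> = \<bar>\<bar>l 0\<bar> - \<bar>l 1\<bar>\<bar>"
proof -
  define a b where "a = \<bar>l 0\<bar>" and "b = \<bar>l 1\<bar>"
  have "char_poly (msqrt (msqrt \<rho> * spin_flip \<rho> * msqrt \<rho>)) = linear_factors [a, b, 0, 0]"
    using char_poly_unitary_conj[OF unitary_mat_mult[OF U W], of "\<lambda>i. \<bar>l i\<bar>"] l
    by (simp add: msqrt_flip_takagi[OF U W g \<rho> takagi] upt_rec a_def b_def numeral_2_eq_2 numeral_3_eq_3)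
  also have "linear_factors [a, b, 0, 0] = linear_factors [max a b, min a b, 0, 0]"
  proof (cases "a \<le> b")
    case True
    then have "[max a b, min a b, 0, 0] = [b, a, 0, 0]" by simp
    then show ?thesis by (simp only: list.map prod_list.Cons mult.left_commute)
  qed simp
  finally have "conc_eigs \<rho> = [max a b, min a b, 0, 0]"
    by (intro conc_eigs_eqI) (auto simp: a_def b_def)
  then show ?thesis by (simp add: concurrence_def a_def b_def max_def min_def abs_if)
qed

section \<open>Complex symmetric \<open>2 \<times> 2\<close> blocks\<close>

definition weights2 :: "real \<Rightarrow> real \<Rightarrow> nat \<Rightarrow> real" where
  "weights2 a b i = (if i = 0 then a else if i = 1 then b else 0)"

definition block2 :: "complex \<Rightarrow> complex \<Rightarrow> complex \<Rightarrow> complex mat" where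
  "block2 p q r = mat_of_rows_list 4 [[p, q, 0, 0], [q, r, 0, 0], [0, 0, 0, 0], [0, 0, 0, 0]]"

lemma block2_dims [simp]: "dim_row (block2 p q r) = 4" "dim_col (block2 p q r) = 4"
  by (simp_all add: block2_def)

definition phase_rotation :: "real \<Rightarrow> real \<Rightarrow> complex \<Rightarrow> complex mat" where
  "phase_rotation x y F = mat_of_rows_list 4
     [[complex_of_real x, - complex_of_real y, 0, 0],
      [F * complex_of_real y, F * complex_of_real x, 0, 0],
      [0, 0, 1, 0],
      [0, 0, 0, 1]]"

lemma phase_rotation_dims [simp]:
  "dim_row (phase_rotation x y F) = 4" "dim_col (phase_rotation x y F) = 4"
  by (simp_all add: phase_rotation_def)

lemma phase_rotation_unitary:
  assumes xy: "x * x + y * y = 1" and F: "cnj F * F = 1"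
  shows "unitary_mat 4 (phase_rotation x y F)"
proof -
  have xy': "complex_of_real x * complex_of_real x + complex_of_real y * complex_of_real y = 1"
    "complex_of_real y * complex_of_real y + complex_of_real x * complex_of_real x = 1"
    by (metis add.commute of_real_1 of_real_add of_real_mult xy)+
  have F': "cnj F * z * (F * w) = z * w" for z w
  proof -
    have "cnj F * z * (F * w) = (cnj F * F) * (z * w)" by (simp only: ac_simps)
    then show ?thesis using F by simp
  qed
  have "adjoint_mat (phase_rotation x y F) * phase_rotation x y F = 1\<^sub>m 4"
    by (rule mat_4_eqI) (simp_all add: index_mult_mat_4 phase_rotation_def F' xy' del: index_mult_mat(1))
  then show ?thesis by (auto simp: unitary_mat_def)
qed

lemma phase_rotation_takagi:
  "phase_rotation x y F * real_diag 4 (weights2 l1 l2) * transpose_mat (phase_rotation x y F)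
   = block2 (of_real (x * x * l1 + y * y * l2)) (F * of_real (x * y * (l1 - l2)))
       (F\<^sup>2 * of_real (y * y * l1 + x * x * l2))"
  apply (rule mat_4_eqI)
  apply (simp_all add: index_mult_mat_4 del: index_mult_mat(1))
  apply (simp_all add: phase_rotation_def block2_def weights2_def power2_eq_square algebra_simps)
  done

text \<open>Rotation by half the angle of \<open>(a - d, 2 b)\<close> diagonalises \<open>[[a, b], [b, d]]\<close>.\<close>
lemma sym2_rotation_diagonalization:
  fixes a b d :: real
  shows "\<exists>x y l1 l2. x * x + y * y = 1 \<and> a = x * x * l1 + y * y * l2 \<and> b = x * y * (l1 - l2)
    \<and> d = y * y * l1 + x * x * l2"
proof -
  define r where "r = sqrt ((a - d)\<^sup>2 + (2 * b)\<^sup>2)"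
  show ?thesis
  proof (cases "r = 0")
    case True
    then have "(a - d)\<^sup>2 + (2 * b)\<^sup>2 = 0" unfolding r_def by simp
    then have "a = d" "b = 0" by (auto simp: add_nonneg_eq_0_iff)
    then show ?thesis by (intro exI[of _ 1] exI[of _ 0] exI[of _ a]) auto
  next
    case False
    have r: "r > 0" using False unfolding r_def by (simp add: order_neq_le_trans)
    have rr: "r * r = (a - d)\<^sup>2 + (2 * b)\<^sup>2" unfolding r_def by (simp add: real_sqrt_mult_self)
    have "((a - d) / r)\<^sup>2 + (2 * b / r)\<^sup>2 = 1"
      using r rr by (simp add: power_divide field_simps power2_eq_square)
    then obtain t where t: "(a - d) / r = cos t" "2 * b / r = sin t"
      using sincos_total_2pi by metis
    define x y where "x = cos (t / 2)" and "y = sin (t / 2)"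
    have xy: "x * x + y * y = 1"
      unfolding x_def y_def by (simp add: sin_squared_eq[symmetric] power2_eq_square)
    have cos_t: "x * x - y * y = (a - d) / r"
      unfolding t x_def y_def using cos_double[of "t / 2"] by (simp add: power2_eq_square)
    have sin_t: "2 * x * y = 2 * b / r"
      unfolding t x_def y_def using sin_double[of "t / 2"] by (simp add: mult.assoc)
    define l1 l2 where "l1 = (a + d + r) / 2" and "l2 = (a + d - r) / 2"
    have "x * x * l1 + y * y * l2 = (x * x + y * y) * (a + d) / 2 + (x * x - y * y) * r / 2"
      by (simp add: l1_def l2_def field_simps)
    then have a: "a = x * x * l1 + y * y * l2" using xy cos_t r by (simp add: field_simps)
    have "x * y * (l1 - l2) = (2 * x * y) * r / 2" by (simp add: l1_def l2_def field_simps)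
    then have b: "b = x * y * (l1 - l2)" using sin_t r by simp
    have "y * y * l1 + x * x * l2 = (x * x + y * y) * (a + d) / 2 - (x * x - y * y) * r / 2"
      by (simp add: l1_def l2_def field_simps)
    then have d: "d = y * y * l1 + x * x * l2" using xy cos_t r by (simp add: field_simps)
    show ?thesis using xy a b d by blast
  qed
qed

lemma abs_diff_abs_eq_abs_add:
  fixes p q :: real
  assumes "p * q \<le> 0"
  shows "\<bar>\<bar>p\<bar> - \<bar>q\<bar>\<bar> = \<bar>p + q\<bar>"
  using assms by (auto simp: abs_if mult_le_0_iff)

text \<open>The eigenvalues \<open>l\<^sub>1, l\<^sub>2\<close> of the real block have sum \<open>a + d\<close> and product
  \<open>a d - b\<^sup>2 \<le> 0\<close>, so \<open>||l\<^sub>1| - |l\<^sub>2|| = |a + d|\<close>.\<close>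
lemma concurrence_block2:
  fixes a b d :: real and F :: complex
  assumes U: "unitary_mat 4 U" and g: "\<And>i. 0 \<le> g i"
    and \<rho>: "\<rho> = U * real_diag 4 g * adjoint_mat U"
    and K: "flip_core U g = block2 (of_real a) (F * of_real b) (F\<^sup>2 * of_real d)"
    and F: "cnj F * F = 1" and det: "a * d \<le> b\<^sup>2"
  shows "concurrence \<rho> = \<bar>a + d\<bar>"
proof -
  obtain x y l1 l2 where xy: "x * x + y * y = 1" and abd: "a = x * x * l1 + y * y * l2"
    "b = x * y * (l1 - l2)" "d = y * y * l1 + x * x * l2"
    using sym2_rotation_diagonalization by blast
  have "flip_core U g = phase_rotation x y F * real_diag 4 (weights2 l1 l2) * transpose_mat (phase_rotation x y F)"
    unfolding K phase_rotation_takagi abd ..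
  then have "concurrence \<rho> = \<bar>\<bar>l1\<bar> - \<bar>l2\<bar>\<bar>"
    using concurrence_takagi[OF U phase_rotation_unitary[OF xy F] g \<rho>] by (simp add: weights2_def)
  also have "\<dots> = \<bar>l1 + l2\<bar>"
  proof (rule abs_diff_abs_eq_abs_add)
    have "a * d - b\<^sup>2 = l1 * l2 * (x * x + y * y)\<^sup>2"
      unfolding abd by (simp add: power2_eq_square algebra_simps)
    then show "l1 * l2 \<le> 0" using xy det by simp
  qed
  also have "l1 + l2 = a + d"
    using xy unfolding abd by (simp add: algebra_simps) (simp flip: distrib_left add.assoc)
  finally show ?thesis .
qed

section \<open>The canonical state\<close>

text \<open>The columns are \<open>\<psi>\<^sub>1\<close>, \<open>\<psi>\<^sub>2\<close> and two vectors completing them to an orthonormal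
  basis. The cosines, sines and the phase are kept as abstract complex numbers, so that
  unitarity becomes a polynomial identity.\<close>
definition frame_mat ::
  "complex \<Rightarrow> complex \<Rightarrow> complex \<Rightarrow> complex \<Rightarrow> complex \<Rightarrow> complex \<Rightarrow> complex \<Rightarrow> complex mat" where
  "frame_mat c s c\<phi> s\<phi> c\<alpha> s\<alpha> e = mat_of_rows_list 4
     [[c, e * s\<phi> * s, e * c\<phi> * s, 0],
      [0, c\<phi> * c\<alpha>, - (s\<phi> * c\<alpha>), - s\<alpha>],
      [0, c\<phi> * s\<alpha>, - (s\<phi> * s\<alpha>), c\<alpha>],
      [s, - (e * s\<phi> * c), - (e * c\<phi> * c), 0]]"

lemma frame_mat_dims [simp]:
  "dim_row (frame_mat c s c\<phi> s\<phi> c\<alpha> s\<alpha> e) = 4" "dim_col (frame_mat c s c\<phi> s\<phi> c\<alpha> s\<alpha> e) = 4"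
  by (simp_all add: frame_mat_def)

lemma frame_mat_unitary:
  assumes real: "cnj c = c" "cnj s = s" "cnj c\<phi> = c\<phi>" "cnj s\<phi> = s\<phi>" "cnj c\<alpha> = c\<alpha>" "cnj s\<alpha> = s\<alpha>"
    and "c * c + s * s = 1" "c\<phi> * c\<phi> + s\<phi> * s\<phi> = 1" "c\<alpha> * c\<alpha> + s\<alpha> * s\<alpha> = 1" "cnj e * e = 1"
  shows "unitary_mat 4 (frame_mat c s c\<phi> s\<phi> c\<alpha> s\<alpha> e)"
proof -
  have "adjoint_mat (frame_mat c s c\<phi> s\<phi> c\<alpha> s\<alpha> e) * frame_mat c s c\<phi> s\<phi> c\<alpha> s\<alpha> e = 1\<^sub>m 4"
    apply (rule mat_4_eqI)
    apply (simp_all add: index_mult_mat_4 del: index_mult_mat(1))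
    apply (simp_all add: frame_mat_def real)
    using assms(7-) by ((simp add: add.commute; fail) | Groebner_Basis.algebra)+
  then show ?thesis by (auto simp: unitary_mat_def)
qed

lemma frame_mat_flip_core:
  assumes real: "cnj c = c" "cnj s = s" "cnj c\<phi> = c\<phi>" "cnj s\<phi> = s\<phi>" "cnj c\<alpha> = c\<alpha>" "cnj s\<alpha> = s\<alpha>"
    and h: "h 2 = 0" "h 3 = 0"
  shows "mat_diag 4 h * adjoint_mat (frame_mat c s c\<phi> s\<phi> c\<alpha> s\<alpha> e) * spin_flip_mat
      * conj_mat (frame_mat c s c\<phi> s\<phi> c\<alpha> s\<alpha> e) * mat_diag 4 h
    = block2 (- h 0 * h 0 * (2 * c * s)) (cnj e * h 0 * h 1 * s\<phi> * (c * c - s * s))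
        ((cnj e)\<^sup>2 * h 1 * h 1 * s\<phi> * s\<phi> * (2 * s * c) + h 1 * h 1 * c\<phi> * c\<phi> * (2 * c\<alpha> * s\<alpha>))"
  apply (rule mat_4_eqI)
  apply (simp_all add: index_mult_mat_4 del: index_mult_mat(1))
  apply (simp_all add: frame_mat_def spin_flip_mat_def block2_def real h)
  apply (simp_all add: power2_eq_square algebra_simps)
  done

definition canon_frame :: "real \<Rightarrow> real \<Rightarrow> real \<Rightarrow> real \<Rightarrow> complex mat" where
  "canon_frame \<theta> \<phi> \<alpha> \<beta> = frame_mat (complex_of_real (cos \<theta>)) (complex_of_real (sin \<theta>))
     (complex_of_real (cos \<phi>)) (complex_of_real (sin \<phi>)) (complex_of_real (cos \<alpha>))
     (complex_of_real (sin \<alpha>)) (cis \<beta>)"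

lemma cos_sq_add_sin_sq_complex:
  "complex_of_real (cos t) * complex_of_real (cos t) + complex_of_real (sin t) * complex_of_real (sin t) = 1"
  by (metis of_real_1 of_real_add of_real_mult sin_cos_squared_add3)

lemma canon_frame_unitary: "unitary_mat 4 (canon_frame \<theta> \<phi> \<alpha> \<beta>)"
  unfolding canon_frame_def
  by (rule frame_mat_unitary) (simp_all add: cos_sq_add_sin_sq_complex cis_cnj cis_mult)

lemma proj_sum_unitary_conj:
  assumes U: "U \<in> carrier_mat 4 4" and v: "dim_vec v1 = 4" "dim_vec v2 = 4"
    and cols: "\<And>i. i < 4 \<Longrightarrow> U $$ (i, 0) = v1 $ i" "\<And>i. i < 4 \<Longrightarrow> U $$ (i, 1) = v2 $ i"
  shows "complex_of_real n1 \<cdot>\<^sub>m proj v1 + complex_of_real n2 \<cdot>\<^sub>m proj v2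
    = U * real_diag 4 (weights2 n1 n2) * adjoint_mat U"
proof -
  have "U $$ (0, 0) = v1 $ 0" "U $$ (1, 0) = v1 $ 1" "U $$ (2, 0) = v1 $ 2" "U $$ (3, 0) = v1 $ 3"
     "U $$ (0, 1) = v2 $ 0" "U $$ (1, 1) = v2 $ 1" "U $$ (2, 1) = v2 $ 2" "U $$ (3, 1) = v2 $ 3"
    using cols by auto
  moreover have "dim_row U = 4" "dim_col U = 4" using U by auto
  ultimately show ?thesis
    using v
    apply (intro mat_4_eqI)
    apply (simp_all add: index_mult_mat_4 proj_def del: index_mult_mat(1))
    apply (simp_all add: weights2_def algebra_simps)
    done
qed

lemma canon_state_unitary_conj:
  "canon_state \<theta> \<phi> \<alpha> \<beta> \<nu>1 \<nu>2
    = canon_frame \<theta> \<phi> \<alpha> \<beta> * real_diag 4 (weights2 \<nu>1 \<nu>2) * adjoint_mat (canon_frame \<theta> \<phi> \<alpha> \<beta>)"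
  unfolding canon_state_def
  by (rule proj_sum_unitary_conj)
    (auto simp: psi1_def psi2_def ket_def canon_frame_def frame_mat_def eval_nat_numeral less_Suc_eq)

lemma flip_core_canon_frame:
  assumes \<nu>: "0 \<le> \<nu>1" "0 \<le> \<nu>2"
  shows "flip_core (canon_frame \<theta> \<phi> \<alpha> \<beta>) (weights2 \<nu>1 \<nu>2)
    = block2 (of_real (- \<nu>1 * sin (2 * \<theta>)))
        (cnj (cis \<beta>) * of_real (sqrt \<nu>1 * sqrt \<nu>2 * sin \<phi> * cos (2 * \<theta>)))
        ((cnj (cis \<beta>))\<^sup>2 * of_real (\<nu>2 * (sin \<phi>)\<^sup>2 * sin (2 * \<theta>))
          + of_real (\<nu>2 * (cos \<phi>)\<^sup>2 * sin (2 * \<alpha>)))"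
proof -
  have sq: "complex_of_real (sqrt x) * complex_of_real (sqrt x) = complex_of_real x" if "0 \<le> x" for x
    using that by (simp flip: of_real_mult)
  show ?thesis
    unfolding flip_core_def canon_frame_def
    apply (subst frame_mat_flip_core)
    apply (simp_all add: weights2_def)
    apply (rule mat_4_eqI)
    apply (simp_all add: block2_def sq \<nu> sin_double cos_double power2_eq_square)
    done
qed

lemma concurrence_canon_state_phi_zero:
  assumes \<theta>: "0 \<le> \<theta>" "\<theta> \<le> pi / 2" and \<alpha>: "0 \<le> \<alpha>" "\<alpha> \<le> pi / 2" and \<nu>: "0 \<le> \<nu>1" "0 \<le> \<nu>2"
  shows "concurrence (canon_state \<theta> 0 \<alpha> \<beta> \<nu>1 \<nu>2) = \<bar>\<nu>2 * sin (2 * \<alpha>) - \<nu>1 * sin (2 * \<theta>)\<bar>"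
proof -
  have K: "flip_core (canon_frame \<theta> 0 \<alpha> \<beta>) (weights2 \<nu>1 \<nu>2)
      = block2 (of_real (- \<nu>1 * sin (2 * \<theta>))) (1 * of_real 0) (1\<^sup>2 * of_real (\<nu>2 * sin (2 * \<alpha>)))"
    using flip_core_canon_frame[OF \<nu>, of \<theta> 0 \<alpha> \<beta>] by simp
  have "0 \<le> sin (2 * \<theta>)" "0 \<le> sin (2 * \<alpha>)" using \<theta> \<alpha> by (simp_all add: sin_ge_zero)
  then have det: "(- \<nu>1 * sin (2 * \<theta>)) * (\<nu>2 * sin (2 * \<alpha>)) \<le> 0\<^sup>2"
    using \<nu> by simp
  have "concurrence (canon_state \<theta> 0 \<alpha> \<beta> \<nu>1 \<nu>2) = \<bar>- \<nu>1 * sin (2 * \<theta>) + \<nu>2 * sin (2 * \<alpha>)\<bar>"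
    by (rule concurrence_block2[OF canon_frame_unitary _ canon_state_unitary_conj K _ det])
      (use \<nu> in \<open>simp_all add: weights2_def\<close>)
  then show ?thesis by simp
qed

lemma concurrence_canon_state_degenerate:
  assumes \<theta>: "0 \<le> \<theta>" "\<theta> \<le> pi / 2" and \<nu>: "0 \<le> \<nu>1" "0 \<le> \<nu>2"
    and degenerate: "cos \<phi> * sin (2 * \<alpha>) = 0"
  shows "concurrence (canon_state \<theta> \<phi> \<alpha> \<beta> \<nu>1 \<nu>2) = sin (2 * \<theta>) * \<bar>\<nu>1 - \<nu>2 * (sin \<phi>)\<^sup>2\<bar>"
proof -
  define a b d where "a = - \<nu>1 * sin (2 * \<theta>)" and "b = sqrt \<nu>1 * sqrt \<nu>2 * sin \<phi> * cos (2 * \<theta>)"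
    and "d = \<nu>2 * (sin \<phi>)\<^sup>2 * sin (2 * \<theta>)"
  have "b\<^sup>2 = \<nu>1 * \<nu>2 * (sin \<phi>)\<^sup>2 * (1 - (sin (2 * \<theta>))\<^sup>2)"
    using \<nu> by (simp add: b_def power_mult_distrib cos_squared_eq)
  then have "a * d - b\<^sup>2 = - (\<nu>1 * \<nu>2 * (sin \<phi>)\<^sup>2)"
    by (simp add: a_def d_def power2_eq_square algebra_simps)
  also have "\<dots> \<le> 0" using \<nu> by simp
  finally have det: "a * d \<le> b\<^sup>2" by simp
  have "\<nu>2 * (cos \<phi>)\<^sup>2 * sin (2 * \<alpha>) = \<nu>2 * cos \<phi> * (cos \<phi> * sin (2 * \<alpha>))"
    by (simp add: power2_eq_square)
  then have "\<nu>2 * (cos \<phi>)\<^sup>2 * sin (2 * \<alpha>) = 0" using degenerate by simp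
  note flip_core_canon_frame[OF \<nu>, of \<theta> \<phi> \<alpha> \<beta>, unfolded this]
  then have K: "flip_core (canon_frame \<theta> \<phi> \<alpha> \<beta>) (weights2 \<nu>1 \<nu>2)
      = block2 (of_real a) (cnj (cis \<beta>) * of_real b) ((cnj (cis \<beta>))\<^sup>2 * of_real d)"
    by (simp add: a_def b_def d_def)
  have "concurrence (canon_state \<theta> \<phi> \<alpha> \<beta> \<nu>1 \<nu>2) = \<bar>a + d\<bar>"
    by (rule concurrence_block2[OF canon_frame_unitary _ canon_state_unitary_conj K _ det])
      (use \<nu> in \<open>simp_all add: weights2_def cis_cnj cis_mult\<close>)
  also have "a + d = - (sin (2 * \<theta>) * (\<nu>1 - \<nu>2 * (sin \<phi>)\<^sup>2))"
    by (simp add: a_def d_def algebra_simps)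
  finally show ?thesis
    using \<theta> by (simp add: abs_mult sin_ge_zero)
qed

theorem mainTheorem3:
  fixes \<theta> \<phi> \<alpha> \<beta> \<nu>1 \<nu>2 :: real
  assumes "0 \<le> \<theta>" "\<theta> \<le> pi / 2" "0 \<le> \<phi>" "\<phi> \<le> pi / 2" "0 \<le> \<alpha>" "\<alpha> \<le> pi / 2"
    and "0 \<le> \<beta>" "\<beta> \<le> 2 * pi"
    and "0 \<le> \<nu>1" "\<nu>1 \<le> 1" "0 \<le> \<nu>2" "\<nu>2 \<le> 1" "\<nu>1 + \<nu>2 = 1"
  defines "\<rho> \<equiv> canon_state \<theta> \<phi> \<alpha> \<beta> \<nu>1 \<nu>2"
  shows "(\<phi> = 0 \<longrightarrow> concurrence \<rho> = \<bar>\<nu>2 * sin (2 * \<alpha>) - \<nu>1 * sin (2 * \<theta>)\<bar>)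
       \<and> (\<phi> = pi / 2 \<longrightarrow> concurrence \<rho> = \<bar>\<nu>1 - \<nu>2\<bar> * sin (2 * \<theta>))
       \<and> (sin (2 * \<alpha>) = 0 \<longrightarrow> concurrence \<rho> = sin (2 * \<theta>) * \<bar>\<nu>1 - \<nu>2 * (sin \<phi>)\<^sup>2\<bar>)"
proof (intro conjI impI)
  assume "\<phi> = 0"
  then show "concurrence \<rho> = \<bar>\<nu>2 * sin (2 * \<alpha>) - \<nu>1 * sin (2 * \<theta>)\<bar>"
    unfolding \<rho>_def using assms(1,2,5,6,9,11) by (simp add: concurrence_canon_state_phi_zero)
next
  assume \<phi>: "\<phi> = pi / 2"
  have "cos \<phi> = 0" unfolding \<phi> by (rule cos_pi_half)
  then have "concurrence \<rho> = sin (2 * \<theta>) * \<bar>\<nu>1 - \<nu>2 * (sin \<phi>)\<^sup>2\<bar>"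
    unfolding \<rho>_def using assms(1,2,9,11) by (intro concurrence_canon_state_degenerate) auto
  then show "concurrence \<rho> = \<bar>\<nu>1 - \<nu>2\<bar> * sin (2 * \<theta>)" using \<phi> by simp
next
  assume "sin (2 * \<alpha>) = 0"
  then show "concurrence \<rho> = sin (2 * \<theta>) * \<bar>\<nu>1 - \<nu>2 * (sin \<phi>)\<^sup>2\<bar>"
    unfolding \<rho>_def using assms(1,2,9,11) by (intro concurrence_canon_state_degenerate) auto
qed

end
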